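(* Consider a two-armed bandit and the Chernoff-Overlap sampling rule run without elimination, i.e. after pulling each arm once, at each time $t$ an arm in $\arg\min_{a\in\{1,2\}}\sqrt{\hat c_a(t)}\,N_a(t)$ is pulled. Then \[ \mathbb{P}\left(\lim_{t\to\infty}\frac{\hat c_a(t)N_a(t)}{J(t)}=\frac{\sqrt{c_a}}{\sqrt{c_1}+\sqrt{c_2}}\ \text{ for all } a\in\{1,2\}\right)=1. \]
   Context: Two arms $\{1,2\}$; arm $a$ has a cost distribution with mean $c_a$ supported in $[\ell,1]$, $\ell>0$ (rewards are irrelevant here). At round $t$ the pulled arm $A_t$ yields a cost $C_t$ drawn from its cost distribution, independently of the past. $N_a(t)$ is the number of pulls of arm $a$ up to $t$, $\hat c_a(t)$ the empirical mean cost of arm $a$, and $J(t)=\sum_{k\le t}C_k$. *)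

theory Defs
  imports "HOL-Probability.Probability"
begin

text \<open>Two-armed bandit, arms 1 and 2, rounds t = 1, 2, 3, ...  X a k w : cost of the (k+1)-th pull of arm a
  (the usual "stack of samples" model: the k-th pull of arm a returns X a k,
  samples independent and identically distributed per arm).\<close>

definition npulls :: "(nat \<Rightarrow> 'w \<Rightarrow> nat) \<Rightarrow> nat \<Rightarrow> nat \<Rightarrow> 'w \<Rightarrow> nat" where
  "npulls A a t w = card {s \<in> {1..t}. A s w = a}"

definition cost :: "(nat \<Rightarrow> 'w \<Rightarrow> nat) \<Rightarrow> (nat \<Rightarrow> nat \<Rightarrow> 'w \<Rightarrow> real) \<Rightarrow> nat \<Rightarrow> 'w \<Rightarrow> real" where
  "cost A X s w = X (A s w) (npulls A (A s w) (s - 1) w) w"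

definition emp_cost :: "(nat \<Rightarrow> 'w \<Rightarrow> nat) \<Rightarrow> (nat \<Rightarrow> nat \<Rightarrow> 'w \<Rightarrow> real) \<Rightarrow> nat \<Rightarrow> nat \<Rightarrow> 'w \<Rightarrow> real" where
  "emp_cost A X a t w =
     (\<Sum>s\<in>{s \<in> {1..t}. A s w = a}. cost A X s w) / real (npulls A a t w)"

definition total_cost :: "(nat \<Rightarrow> 'w \<Rightarrow> nat) \<Rightarrow> (nat \<Rightarrow> nat \<Rightarrow> 'w \<Rightarrow> real) \<Rightarrow> nat \<Rightarrow> 'w \<Rightarrow> real" where
  "total_cost A X t w = (\<Sum>s\<in>{1..t}. cost A X s w)"

definition co_rule :: "(nat \<Rightarrow> 'w \<Rightarrow> nat) \<Rightarrow> (nat \<Rightarrow> nat \<Rightarrow> 'w \<Rightarrow> real) \<Rightarrow> 'w \<Rightarrow> bool" where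
  "co_rule A X w \<longleftrightarrow>
     {A 1 w, A 2 w} = {1, 2} \<and>
     (\<forall>t\<ge>2. A (Suc t) w \<in> {1, 2} \<and>
        (\<forall>b\<in>{1, 2::nat}.
           sqrt (emp_cost A X (A (Suc t) w) t w) * real (npulls A (A (Suc t) w) t w)
           \<le> sqrt (emp_cost A X b t w) * real (npulls A b t w)))"

end

theory Submission
  imports Defs
begin

text \<open>
  Let \<open>m\<^sub>a\<close> be the empirical mean cost of arm \<open>a\<close> and \<open>I\<^sub>a = m\<^sub>a N\<^sub>a\<^sup>2\<close> the square of its
  Chernoff-Overlap index, i.e. the cost collected from arm \<open>a\<close> times its number of pulls.
  Since the costs lie in \<open>[l, 1]\<close>, one more pull multiplies \<open>I\<^sub>a\<close> by at most
  \<open>(1 + 1/(l N\<^sub>a)) (1 + 1/N\<^sub>a)\<close>, and only the arm with the smaller index is pulled; by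
  induction each index is at most this factor times the other one. As \<open>I\<^sub>a\<close> is of order
  \<open>N\<^sub>a\<^sup>2\<close>, both arms are pulled infinitely often, so the factor tends to 1 and
  \<open>I\<^sub>1 / I\<^sub>2 \<longrightarrow> 1\<close>. By the strong law of large numbers (for bounded costs it follows from
  Hoeffding's inequality and Borel-Cantelli) \<open>m\<^sub>a \<longrightarrow> c\<^sub>a\<close> almost surely, and the cost share
  \<open>m\<^sub>a N\<^sub>a / J = \<surd>(m\<^sub>a I\<^sub>a) / (\<surd>(m\<^sub>1 I\<^sub>1) + \<surd>(m\<^sub>2 I\<^sub>2))\<close> tends to
  \<open>\<surd>c\<^sub>a / (\<surd>c\<^sub>1 + \<surd>c\<^sub>2)\<close>.
\<close>

lemma (in prob_space) indep_vars_reindex: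
  assumes indep: "indep_vars M' X (g ` I)" and inj: "inj_on g I"
  shows "indep_vars (\<lambda>i. M' (g i)) (\<lambda>i. X (g i)) I"
proof -
  have rv: "\<forall>i\<in>g ` I. random_variable (M' i) (X i)"
    and sets_indep: "indep_sets (\<lambda>i. sigma_sets (space M) {X i -` A \<inter> space M |A. A \<in> sets (M' i)}) (g ` I)"
    using indep unfolding indep_vars_def by auto
  show ?thesis unfolding indep_vars_def
  proof (intro conjI ballI indep_setsI)
    fix i assume "i \<in> I"
    then show "random_variable (M' (g i)) (X (g i))"
      and "sigma_sets (space M) {X (g i) -` A \<inter> space M |A. A \<in> sets (M' (g i))} \<subseteq> events"
      using rv sets_indep unfolding indep_sets_def by auto
  next
    fix B J assume J: "J \<noteq> {}" "J \<subseteq> I" "finite J"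
      and B: "\<forall>j\<in>J. B j \<in> sigma_sets (space M) {X (g j) -` A \<inter> space M |A. A \<in> sets (M' (g j))}"
    have inj_J: "inj_on g J" using inj J by (auto intro: inj_on_subset)
    define h where "h = the_inv_into J g"
    have h_g: "h (g j) = j" if "j \<in> J" for j using the_inv_into_f_f[OF inj_J that] h_def by simp
    have "prob (\<Inter>y\<in>g ` J. B (h y)) = (\<Prod>y\<in>g ` J. prob (B (h y)))"
      using J B h_g by (intro indep_setsD[OF sets_indep]) auto
    then show "prob (\<Inter>j\<in>J. B j) = (\<Prod>j\<in>J. prob (B j))"
      using h_g by (simp add: prod.reindex[OF inj_J])
  qed
qed

lemma (in prob_space) indep_vars_row:
  assumes "indep_vars M' (\<lambda>(i, j). X i j) (I \<times> J)" and "i \<in> I"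
  shows "indep_vars (\<lambda>j. M' (i, j)) (X i) J"
proof -
  have "indep_vars M' (\<lambda>(i, j). X i j) (Pair i ` J)"
    using assms by (intro indep_vars_subset[OF assms(1)]) auto
  then show ?thesis
    using indep_vars_reindex[of M' "\<lambda>(i, j). X i j" "Pair i" J] by (simp add: inj_on_def)
qed

lemma (in prob_space) prob_sum_deviation_le:
  fixes Y :: "nat \<Rightarrow> 'a \<Rightarrow> real"
  assumes indep: "indep_vars (\<lambda>_. borel) Y UNIV"
    and bounded: "\<And>k. AE x in M. Y k x \<in> {a..b}" and "a < b"
    and mean: "\<And>k. expectation (Y k) = \<mu>"
    and "\<epsilon> > 0"
  shows "prob {x\<in>space M. \<epsilon> * n \<le> \<bar>(\<Sum>k<n. Y k x) - n * \<mu>\<bar>} \<le> 2 * exp (-2 * \<epsilon>\<^sup>2 / (b - a)\<^sup>2) ^ n"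
proof (cases "n = 0")
  case False
  interpret Hoeffding_ineq M "{..<n}" Y "\<lambda>_. a" "\<lambda>_. b" "\<Sum>k<n. expectation (Y k)"
    using indep_vars_subset[OF indep] bounded by unfold_locales auto
  have "prob {x\<in>space M. \<bar>(\<Sum>k<n. Y k x) - (\<Sum>k<n. expectation (Y k))\<bar> \<ge> \<epsilon> * n}
          \<le> 2 * exp (-2 * (\<epsilon> * n)\<^sup>2 / (\<Sum>k<n. (b - a)\<^sup>2))"
    using \<open>\<epsilon> > 0\<close> \<open>a < b\<close> False by (intro Hoeffding_ineq_abs_ge) auto
  also have "-2 * (\<epsilon> * n)\<^sup>2 / (\<Sum>k<n. (b - a)\<^sup>2) = n * (-2 * \<epsilon>\<^sup>2 / (b - a)\<^sup>2)"
    using False by (simp add: power_mult_distrib power2_eq_square[of "real n"])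
  also have "exp (n * (-2 * \<epsilon>\<^sup>2 / (b - a)\<^sup>2)) = exp (-2 * \<epsilon>\<^sup>2 / (b - a)\<^sup>2) ^ n"
    by (rule exp_of_nat_mult)
  finally show ?thesis by (simp add: mean)
qed (simp add: prob_space)

lemma (in prob_space) AE_eventually_average_close:
  fixes Y :: "nat \<Rightarrow> 'a \<Rightarrow> real"
  assumes indep: "indep_vars (\<lambda>_. borel) Y UNIV"
    and bounded: "\<And>k. AE x in M. Y k x \<in> {a..b}" and "a < b"
    and mean: "\<And>k. expectation (Y k) = \<mu>"
    and "\<epsilon> > 0"
  shows "AE x in M. eventually (\<lambda>n. \<bar>(\<Sum>k<n. Y k x) / n - \<mu>\<bar> < \<epsilon>) sequentially"
proof -
  have [measurable]: "Y k \<in> borel_measurable M" for k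
    using indep unfolding indep_vars_def by auto
  define B where "B n = {x\<in>space M. \<epsilon> * n \<le> \<bar>(\<Sum>k<n. Y k x) - n * \<mu>\<bar>}" for n
  have "B n \<in> sets M" for n unfolding B_def by measurable
  moreover have "summable (\<lambda>n. prob (B n))"
  proof (rule summable_comparison_test')
    show "summable (\<lambda>n. 2 * exp (-2 * \<epsilon>\<^sup>2 / (b - a)\<^sup>2) ^ n)"
      using \<open>\<epsilon> > 0\<close> \<open>a < b\<close> by (intro summable_mult summable_geometric) simp
    show "norm (prob (B n)) \<le> 2 * exp (-2 * \<epsilon>\<^sup>2 / (b - a)\<^sup>2) ^ n" for n
      unfolding B_def using prob_sum_deviation_le[OF assms] by simp
  qed
  ultimately have "AE x in M. eventually (\<lambda>n. x \<in> space M - B n) sequentially"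
    by (intro borel_cantelli_AE1) (auto simp: emeasure_eq_measure)
  then show ?thesis
  proof (rule AE_mp, intro AE_I2 impI)
    fix x assume "x \<in> space M" and "eventually (\<lambda>n. x \<in> space M - B n) sequentially"
    from this(2) show "eventually (\<lambda>n. \<bar>(\<Sum>k<n. Y k x) / n - \<mu>\<bar> < \<epsilon>) sequentially"
      using eventually_ge_at_top[of "1::nat"]
      by eventually_elim (auto simp: B_def field_simps abs_divide)
  qed
qed

theorem (in prob_space) strong_law_of_large_numbers_bounded:
  fixes Y :: "nat \<Rightarrow> 'a \<Rightarrow> real"
  assumes "indep_vars (\<lambda>_. borel) Y UNIV"
    and "\<And>k. AE x in M. Y k x \<in> {a..b}" and "a < b"
    and "\<And>k. expectation (Y k) = \<mu>"
  shows "AE x in M. ((\<lambda>n. (\<Sum>k<n. Y k x) / n) \<longlongrightarrow> \<mu>) sequentially"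
proof -
  have "AE x in M. \<forall>m::nat. eventually (\<lambda>n. \<bar>(\<Sum>k<n. Y k x) / n - \<mu>\<bar> < 1 / Suc m) sequentially"
    using AE_eventually_average_close[OF assms] by (simp add: AE_all_countable)
  then show ?thesis
  proof (rule AE_mp, intro AE_I2 impI)
    fix x assume close: "\<forall>m::nat. eventually (\<lambda>n. \<bar>(\<Sum>k<n. Y k x) / n - \<mu>\<bar> < 1 / Suc m) sequentially"
    show "((\<lambda>n. (\<Sum>k<n. Y k x) / n) \<longlongrightarrow> \<mu>) sequentially"
    proof (rule tendstoI)
      fix e :: real assume "e > 0"
      then obtain m where "inverse (Suc m) < e" using reals_Archimedean by blast
      with close show "eventually (\<lambda>n. dist ((\<Sum>k<n. Y k x) / n) \<mu> < e) sequentially"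
        by (auto elim!: allE[of _ m] eventually_mono simp: dist_real_def divide_inverse)
    qed
  qed
qed

lemma (in prob_space) expectation_eq_if_distr_eq:
  fixes X Y :: "'a \<Rightarrow> 'b::{banach, second_countable_topology}"
  assumes "X \<in> borel_measurable M" "Y \<in> borel_measurable M" and "distr M borel X = distr M borel Y"
  shows "expectation X = expectation Y"
  using integral_distr[OF assms(1), of "\<lambda>x. x"] integral_distr[OF assms(2), of "\<lambda>x. x"] assms(3) by simp

locale co_path =
  fixes A :: "nat \<Rightarrow> 'w \<Rightarrow> nat" and X :: "nat \<Rightarrow> nat \<Rightarrow> 'w \<Rightarrow> real" and w :: 'w and l :: real
  assumes co_rule: "co_rule A X w" and l_pos: "0 < l"
    and cost_bounds: "\<And>a k. a \<in> {1, 2} \<Longrightarrow> l \<le> X a k w \<and> X a k w \<le> 1"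
begin

definition N :: "nat \<Rightarrow> nat \<Rightarrow> nat" where
  "N a t = npulls A a t w"

definition S :: "nat \<Rightarrow> nat \<Rightarrow> real" where
  "S a n = (\<Sum>k<n. X a k w)"

definition sq_index :: "nat \<Rightarrow> nat \<Rightarrow> real" where
  "sq_index a t = S a (N a t) * N a t"

definition growth :: "nat \<Rightarrow> real" where
  "growth n = (1 + 1 / (l * n)) * (1 + 1 / n)"

lemma first_arms: "{A 1 w, A 2 w} = {1, 2}"
  using co_rule unfolding co_rule_def by blast

lemma A_in_arms: "1 \<le> t \<Longrightarrow> A t w \<in> {1, 2}"
proof (cases "t \<le> 2")
  case False
  then have "t = Suc (t - 1)" "2 \<le> t - 1" by auto
  then show ?thesis using co_rule unfolding co_rule_def by metis
qed (use first_arms le_Suc_eq numeral_2_eq_2 in auto)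

lemma N_0 [simp]: "N a 0 = 0"
  unfolding N_def npulls_def by simp

lemma N_Suc: "N a (Suc t) = N a t + (if A (Suc t) w = a then 1 else 0)"
proof -
  have "{s \<in> {1..Suc t}. A s w = a} = {s \<in> {1..t}. A s w = a} \<union> (if A (Suc t) w = a then {Suc t} else {})"
    by (auto simp: le_Suc_eq)
  then show ?thesis unfolding N_def npulls_def by auto
qed

lemma N_mono: "t \<le> t' \<Longrightarrow> N a t \<le> N a t'"
  by (rule lift_Suc_mono_le[where f = "N a"]) (auto simp: N_Suc)

lemma N_2: "a \<in> {1, 2} \<Longrightarrow> N a 2 = 1"
  using first_arms by (auto simp: numeral_2_eq_2 N_Suc doubleton_eq_iff)

lemma N_pos: "a \<in> {1, 2} \<Longrightarrow> 2 \<le> t \<Longrightarrow> 1 \<le> N a t"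
  using N_mono[of 2 t a] N_2 by auto

lemma N_add_other: "a \<in> {1, 2} \<Longrightarrow> N a t + N (3 - a) t = t"
proof (induction t)
  case (Suc t)
  then show ?case using A_in_arms[of "Suc t"] by (auto simp: N_Suc)
qed simp

lemma sum_cost_arm: "(\<Sum>s\<in>{s \<in> {1..t}. A s w = a}. cost A X s w) = S a (N a t)"
proof (induction t)
  case (Suc t)
  show ?case
  proof (cases "A (Suc t) w = a")
    case True
    then have "{s \<in> {1..Suc t}. A s w = a} = insert (Suc t) {s \<in> {1..t}. A s w = a}"
      by (auto simp: le_Suc_eq)
    moreover have "cost A X (Suc t) w = X a (N a t) w"
      unfolding cost_def N_def using True by simp
    ultimately show ?thesis using Suc True by (simp add: N_Suc S_def)
  next
    case False
    then have "{s \<in> {1..Suc t}. A s w = a} = {s \<in> {1..t}. A s w = a}"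
      by (auto simp: le_Suc_eq)
    then show ?thesis using Suc False by (simp add: N_Suc)
  qed
qed (simp add: S_def)

lemma emp_cost_eq: "emp_cost A X a t w = S a (N a t) / N a t"
  unfolding emp_cost_def sum_cost_arm N_def ..

lemma emp_cost_mult_npulls: "emp_cost A X a t w * N a t = S a (N a t)"
  unfolding emp_cost_eq by (cases "N a t = 0") (auto simp: S_def)

lemma total_cost_eq: "total_cost A X t w = S 1 (N 1 t) + S 2 (N 2 t)"
proof -
  have arms: "{1..t} = {s \<in> {1..t}. A s w = 1} \<union> {s \<in> {1..t}. A s w = 2}"
    using A_in_arms by fastforce
  have "total_cost A X t w
      = (\<Sum>s\<in>{s \<in> {1..t}. A s w = 1}. cost A X s w) + (\<Sum>s\<in>{s \<in> {1..t}. A s w = 2}. cost A X s w)"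
    unfolding total_cost_def by (subst arms, subst sum.union_disjoint) auto
  then show ?thesis by (simp only: sum_cost_arm)
qed

lemma S_bounds: "a \<in> {1, 2} \<Longrightarrow> l * n \<le> S a n \<and> S a n \<le> n"
  using sum_mono[of "{..<n}" "\<lambda>_. l" "\<lambda>k. X a k w"] sum_mono[of "{..<n}" "\<lambda>k. X a k w" "\<lambda>_. 1"]
    cost_bounds[of a] by (auto simp: S_def mult.commute)

lemma sqrt_emp_cost_mult_npulls: "sqrt (emp_cost A X a t w) * N a t = sqrt (sq_index a t)"
proof (cases "N a t = 0")
  case False
  then have "sq_index a t = emp_cost A X a t w * (N a t)\<^sup>2"
    by (simp add: sq_index_def emp_cost_eq power2_eq_square)
  then show ?thesis by (simp add: real_sqrt_mult)
qed (simp add: sq_index_def)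

lemma S_nonneg: "a \<in> {1, 2} \<Longrightarrow> 0 \<le> S a n"
  using S_bounds[of a n] l_pos by (smt (verit) of_nat_0_le_iff zero_le_mult_iff)

lemma sq_index_bounds: "a \<in> {1, 2} \<Longrightarrow> l * (N a t)\<^sup>2 \<le> sq_index a t \<and> sq_index a t \<le> (N a t)\<^sup>2"
  using S_bounds[of a "N a t"] mult_right_mono[of "l * N a t" "S a (N a t)" "N a t"]
  by (simp add: sq_index_def power2_eq_square mult_right_mono mult.assoc)

lemma sq_index_pos:
  assumes a: "a \<in> {1, 2}" and "2 \<le> t"
  shows "0 < sq_index a t"
proof -
  have "0 < l * (N a t)\<^sup>2" using l_pos N_pos[OF assms] by simp
  then show ?thesis using sq_index_bounds[OF a, of t] by linarith
qed

lemma sq_index_pulled_le: "2 \<le> t \<Longrightarrow> b \<in> {1, 2} \<Longrightarrow> sq_index (A (Suc t) w) t \<le> sq_index b t"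
  using co_rule unfolding co_rule_def N_def[symmetric] sqrt_emp_cost_mult_npulls by auto

lemma sq_index_not_pulled: "A (Suc t) w \<noteq> a \<Longrightarrow> sq_index a (Suc t) = sq_index a t"
  by (simp add: sq_index_def N_Suc)

lemma sq_index_mono:
  assumes a: "a \<in> {1, 2}"
  shows "sq_index a t \<le> sq_index a (Suc t)"
proof (cases "A (Suc t) w = a")
  case True
  have "S a (N a t) \<le> S a (Suc (N a t))"
    using cost_bounds[OF a, of "N a t"] l_pos by (simp add: S_def)
  then show ?thesis using True S_nonneg[OF a] by (simp add: sq_index_def N_Suc mult_mono)
qed (simp add: sq_index_not_pulled)

lemma sq_index_pulled_Suc_le:
  assumes a: "a \<in> {1, 2}" and "1 \<le> N a t" and "A (Suc t) w = a"
  shows "sq_index a (Suc t) \<le> growth (N a t) * sq_index a t"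
proof -
  define n where "n = N a t"
  have n: "1 \<le> n" using assms n_def by simp
  have "X a n w * (l * n) \<le> S a n"
    using cost_bounds[OF a, of n] S_bounds[OF a, of n] l_pos n
    by (smt (verit) mult_left_le_one_le mult_nonneg_nonneg of_nat_0_le_iff)
  then have "X a n w \<le> S a n / (l * n)"
    using l_pos n by (simp add: pos_le_divide_eq)
  then have "(S a n + X a n w) * (n + 1) \<le> (S a n + S a n / (l * n)) * (n + 1)"
    by (intro mult_right_mono) auto
  also have "\<dots> = growth n * (S a n * n)"
    unfolding growth_def using l_pos n by (simp add: field_simps)
  finally show ?thesis
    using assms by (simp add: sq_index_def N_Suc S_def n_def)
qed

lemma growth_ge_1: "1 \<le> growth n"
  unfolding growth_def using mult_mono[of 1 "1 + 1 / (l * n)" 1 "1 + 1 / n"] l_pos by simp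

lemma growth_pos: "0 < growth n"
  using growth_ge_1 less_le_trans zero_less_one by blast

lemma growth_le: "1 \<le> n \<Longrightarrow> growth n \<le> 2 * (1 + 1 / l)"
proof -
  assume "1 \<le> n"
  then have "1 / (l * n) \<le> 1 / l" and "1 / real n \<le> 1"
    using l_pos by (simp_all add: divide_simps)
  then show ?thesis
    unfolding growth_def using l_pos by (subst mult.commute, intro mult_mono) auto
qed

lemma growth_tendsto_1: "growth \<longlonglongrightarrow> 1"
proof -
  have "(\<lambda>n. (1 + inverse l * inverse (real n)) * (1 + inverse (real n))) \<longlonglongrightarrow> (1 + inverse l * 0) * (1 + 0)"
    by (intro tendsto_intros lim_inverse_n)
  then show ?thesis unfolding growth_def by (simp add: divide_inverse mult.commute)
qed

lemma sq_index_balance: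
  "2 \<le> t \<Longrightarrow> b \<in> {1, 2} \<Longrightarrow> 2 \<le> N b t \<Longrightarrow> sq_index b t \<le> growth (N b t - 1) * sq_index (3 - b) t"
proof (induction t arbitrary: b rule: dec_induct)
  case base
  then show ?case using N_2 by auto
next
  case (step t)
  have other: "3 - b \<in> {1, 2}" "3 - b \<noteq> b" using step by auto
  show ?case
  proof (cases "A (Suc t) w = b")
    case True
    have "sq_index b (Suc t) \<le> growth (N b t) * sq_index b t"
      using sq_index_pulled_Suc_le[OF step(4) N_pos[OF step(4) step(1)] True] .
    also have "\<dots> \<le> growth (N b t) * sq_index (3 - b) t"
      using sq_index_pulled_le[OF step(1) other(1)] True growth_ge_1[of "N b t"]
      by (intro mult_left_mono) auto
    also have "sq_index (3 - b) t = sq_index (3 - b) (Suc t)"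
      using sq_index_not_pulled True other by simp
    finally show ?thesis using True by (simp add: N_Suc)
  next
    case False
    then have "sq_index b (Suc t) \<le> growth (N b t - 1) * sq_index (3 - b) t"
      using step by (simp add: sq_index_not_pulled N_Suc)
    also have "\<dots> \<le> growth (N b t - 1) * sq_index (3 - b) (Suc t)"
      using sq_index_mono[OF other(1)] growth_ge_1[of "N b t - 1"]
      by (intro mult_left_mono) auto
    finally show ?thesis using False by (simp add: N_Suc)
  qed
qed

lemma npulls_other_le:
  assumes a: "a \<in> {1, 2}" and "2 \<le> t"
  shows "real (N (3 - a) t) \<le> 1 + 2 * (1 + 1 / l) / l * (N a t)\<^sup>2"
proof (cases "2 \<le> N (3 - a) t")
  case True
  have b: "3 - a \<in> {1, 2}" "3 - (3 - a) = a" using a by auto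
  have "real (N (3 - a) t) \<le> (N (3 - a) t)\<^sup>2"
    by (metis le_square of_nat_le_iff of_nat_power power2_eq_square)
  then have "l * N (3 - a) t \<le> l * (N (3 - a) t)\<^sup>2"
    using l_pos by simp
  also have "\<dots> \<le> sq_index (3 - a) t"
    using sq_index_bounds[OF b(1)] by blast
  also have "\<dots> \<le> growth (N (3 - a) t - 1) * sq_index a t"
    using sq_index_balance[OF \<open>2 \<le> t\<close> b(1) True] b(2) by simp
  also have "\<dots> \<le> 2 * (1 + 1 / l) * (N a t)\<^sup>2"
    using True growth_le[of "N (3 - a) t - 1"] growth_ge_1 sq_index_bounds[OF a, of t] l_pos
    by (intro mult_mono) (auto intro: order_trans[rotated])
  finally show ?thesis
    using l_pos by (simp add: field_simps add_increasing)
next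
  case False
  moreover have "0 \<le> 2 * (1 + 1 / l) / l * (N a t)\<^sup>2"
    using l_pos by simp
  ultimately show ?thesis by simp
qed

lemma npulls_tendsto_infinity:
  assumes a: "a \<in> {1, 2}"
  shows "filterlim (N a) at_top sequentially"
  unfolding filterlim_at_top
proof
  fix m :: nat
  define C where "C = 2 * (1 + 1 / l) / l"
  have C: "0 \<le> C" using l_pos by (simp add: C_def)
  define T where "T = 2 + m + nat \<lceil>C * m\<^sup>2\<rceil>"
  show "eventually (\<lambda>t. m \<le> N a t) sequentially"
    unfolding eventually_sequentially
  proof (intro exI allI impI)
    fix t assume "T \<le> t"
    show "m \<le> N a t"
    proof (rule ccontr)
      assume "\<not> m \<le> N a t"
      have "real (N (3 - a) t) \<le> 1 + C * (N a t)\<^sup>2"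
        using npulls_other_le[OF a, of t] \<open>T \<le> t\<close> by (simp add: C_def T_def)
      also have "\<dots> \<le> 1 + C * m\<^sup>2"
        using \<open>\<not> m \<le> N a t\<close> C by (intro add_left_mono mult_left_mono power_mono) auto
      finally have "real (N a t) + real (N (3 - a) t) < T"
        using \<open>\<not> m \<le> N a t\<close> unfolding T_def by linarith
      then show False using N_add_other[OF a, of t] \<open>T \<le> t\<close> by linarith
    qed
  qed
qed

lemma growth_npulls_tendsto_1: "a \<in> {1, 2} \<Longrightarrow> (\<lambda>t. growth (N a t - 1)) \<longlonglongrightarrow> 1"
  using filterlim_compose[OF growth_tendsto_1
      filterlim_compose[OF filterlim_minus_const_nat_at_top npulls_tendsto_infinity]] .

lemma sq_index_ratio_tendsto_1:
  assumes a: "a \<in> {1, 2}"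
  shows "(\<lambda>t. sq_index (3 - a) t / sq_index a t) \<longlonglongrightarrow> 1"
proof (rule tendsto_sandwich)
  have b: "3 - a \<in> {1, 2}" "3 - (3 - a) = a" using a by auto
  have large: "eventually (\<lambda>t. 2 \<le> t \<and> 2 \<le> N a t \<and> 2 \<le> N (3 - a) t) sequentially"
    using npulls_tendsto_infinity[OF a] npulls_tendsto_infinity[OF b(1)]
    by (intro eventually_conj eventually_ge_at_top) (auto simp: filterlim_at_top)
  from large have balanced: "eventually (\<lambda>t. 0 < sq_index a t
      \<and> sq_index a t \<le> growth (N a t - 1) * sq_index (3 - a) t
      \<and> sq_index (3 - a) t \<le> growth (N (3 - a) t - 1) * sq_index a t) sequentially"
    by (rule eventually_mono) (use sq_index_pos[OF a] sq_index_balance[OF _ a] sq_index_balance[OF _ b(1)] b(2) in simp)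
  from balanced show "eventually (\<lambda>t. 1 / growth (N a t - 1) \<le> sq_index (3 - a) t / sq_index a t) sequentially"
    by eventually_elim (auto simp: divide_simps mult.commute growth_pos)
  from balanced show "eventually (\<lambda>t. sq_index (3 - a) t / sq_index a t \<le> growth (N (3 - a) t - 1)) sequentially"
    by eventually_elim (auto simp: divide_simps)
  show "(\<lambda>t. 1 / growth (N a t - 1)) \<longlonglongrightarrow> 1"
    using tendsto_divide[OF tendsto_const growth_npulls_tendsto_1[OF a]] by simp
  show "(\<lambda>t. growth (N (3 - a) t - 1)) \<longlonglongrightarrow> 1"
    by (rule growth_npulls_tendsto_1[OF b(1)])
qed

lemma S_npulls_eq: "a \<in> {1, 2} \<Longrightarrow> S a (N a t) = sqrt (emp_cost A X a t w) * sqrt (sq_index a t)"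
proof -
  assume "a \<in> {1, 2}"
  then have "0 \<le> emp_cost A X a t w" by (simp add: emp_cost_eq S_nonneg)
  then show ?thesis
    by (simp flip: sqrt_emp_cost_mult_npulls emp_cost_mult_npulls add: mult.assoc[symmetric])
qed

lemma emp_cost_ge: "a \<in> {1, 2} \<Longrightarrow> 2 \<le> t \<Longrightarrow> l \<le> emp_cost A X a t w"
  using N_pos[of a t] S_bounds[of a "N a t"] by (simp add: emp_cost_eq pos_le_divide_eq)

lemma cost_share_eq:
  assumes a: "a \<in> {1, 2}" and "2 \<le> t"
  shows "emp_cost A X a t w * real (npulls A a t w) / total_cost A X t w
    = sqrt (emp_cost A X a t w) / (sqrt (emp_cost A X a t w)
        + sqrt (emp_cost A X (3 - a) t w) * sqrt (sq_index (3 - a) t / sq_index a t))"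
proof -
  have b: "3 - a \<in> {1, 2}" using a by auto
  define q where "q x = sqrt (sq_index x t)" for x
  have "q a \<noteq> 0" using sq_index_pos[OF assms] by (simp add: q_def)
  have "emp_cost A X a t w * real (npulls A a t w) / total_cost A X t w
      = S a (N a t) / (S a (N a t) + S (3 - a) (N (3 - a) t))"
    unfolding N_def[symmetric] emp_cost_mult_npulls total_cost_eq using a by auto
  also have "\<dots> = (q a * sqrt (emp_cost A X a t w))
      / (q a * (sqrt (emp_cost A X a t w) + sqrt (emp_cost A X (3 - a) t w) * (q (3 - a) / q a)))"
    using \<open>q a \<noteq> 0\<close>
    by (simp add: S_npulls_eq[OF a] S_npulls_eq[OF b] q_def distrib_left mult.commute)
  finally show ?thesis
    using \<open>q a \<noteq> 0\<close> by (simp add: q_def real_sqrt_divide)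
qed

theorem emp_cost_share_tendsto:
  assumes means: "\<And>x. x \<in> {1, 2} \<Longrightarrow> (\<lambda>n. (\<Sum>k<n. X x k w) / n) \<longlonglongrightarrow> c x"
  shows "\<forall>a\<in>{1, 2::nat}. (\<lambda>t. emp_cost A X a t w * real (npulls A a t w) / total_cost A X t w)
           \<longlonglongrightarrow> sqrt (c a) / (sqrt (c 1) + sqrt (c 2))"
proof
  fix a :: nat assume a: "a \<in> {1, 2}"
  have b: "3 - a \<in> {1, 2}" using a by auto
  have emp_cost: "(\<lambda>t. emp_cost A X x t w) \<longlonglongrightarrow> c x" if x: "x \<in> {1, 2}" for x
    using filterlim_compose[OF means[OF x] npulls_tendsto_infinity[OF x]]
    by (simp add: emp_cost_eq S_def)
  have c_ge: "l \<le> c x" if x: "x \<in> {1, 2}" for x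
    by (rule tendsto_lowerbound[OF emp_cost[OF x]])
      (use emp_cost_ge[OF x] in \<open>auto simp: eventually_sequentially\<close>)
  have "0 < sqrt (c a) + sqrt (c (3 - a))"
    using c_ge[OF a] c_ge[OF b] l_pos by (simp add: add_pos_pos)
  then have "(\<lambda>t. sqrt (emp_cost A X a t w) / (sqrt (emp_cost A X a t w)
        + sqrt (emp_cost A X (3 - a) t w) * sqrt (sq_index (3 - a) t / sq_index a t)))
      \<longlonglongrightarrow> sqrt (c a) / (sqrt (c a) + sqrt (c (3 - a)) * sqrt 1)"
    using emp_cost[OF a] emp_cost[OF b] sq_index_ratio_tendsto_1[OF a]
    by (intro tendsto_intros) auto
  also have "sqrt (c a) + sqrt (c (3 - a)) * sqrt 1 = sqrt (c 1) + sqrt (c 2)"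
    using a by auto
  finally show "(\<lambda>t. emp_cost A X a t w * real (npulls A a t w) / total_cost A X t w)
      \<longlonglongrightarrow> sqrt (c a) / (sqrt (c 1) + sqrt (c 2))"
    by (rule Lim_transform_eventually)
      (auto simp: eventually_sequentially cost_share_eq[OF a] intro: exI[of _ 2])
qed

end

theorem lemma8:
  fixes M :: "'w measure"
    and X :: "nat \<Rightarrow> nat \<Rightarrow> 'w \<Rightarrow> real"
    and A :: "nat \<Rightarrow> 'w \<Rightarrow> nat"
    and c :: "nat \<Rightarrow> real"
    and l :: real
  assumes "prob_space M"
    and "l > 0"
    and "prob_space.indep_vars M (\<lambda>_. borel) (\<lambda>(a, k). X a k) ({1, 2} \<times> UNIV)"
    and "\<And>a k. a \<in> {1, 2} \<Longrightarrow> distr M borel (X a k) = distr M borel (X a 0)"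
    and "\<And>a k w. a \<in> {1, 2} \<Longrightarrow> w \<in> space M \<Longrightarrow> l \<le> X a k w \<and> X a k w \<le> 1"
    and "\<And>a. a \<in> {1, 2} \<Longrightarrow> prob_space.expectation M (X a 0) = c a"
    and "\<And>w. w \<in> space M \<Longrightarrow> co_rule A X w"
  shows "AE w in M. \<forall>a\<in>{1, 2::nat}.
           ((\<lambda>t. emp_cost A X a t w * real (npulls A a t w) / total_cost A X t w)
              \<longlongrightarrow> sqrt (c a) / (sqrt (c 1) + sqrt (c 2))) sequentially"
proof -
  interpret prob_space M by (rule assms(1))
  have means: "AE w in M. (\<lambda>n. (\<Sum>k<n. X a k w) / n) \<longlonglongrightarrow> c a" if a: "a \<in> {1, 2}" for a
  proof -
    have indep: "indep_vars (\<lambda>_. borel) (X a) UNIV"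
      by (rule indep_vars_row[OF assms(3) a])
    then have "X a k \<in> borel_measurable M" for k
      unfolding indep_vars_def by auto
    then have "expectation (X a k) = c a" for k
      using expectation_eq_if_distr_eq assms(4,6)[OF a] by metis
    moreover have "AE w in M. X a k w \<in> {0..1}" for k
      using assms(2) by (intro AE_I2) (force dest: assms(5)[OF a, of _ k])
    ultimately show ?thesis
      using indep by (intro strong_law_of_large_numbers_bounded) auto
  qed
  have "AE w in M. \<forall>a\<in>{1, 2::nat}. (\<lambda>n. (\<Sum>k<n. X a k w) / n) \<longlonglongrightarrow> c a"
    by (intro AE_finite_allI means) simp
  then show ?thesis
  proof (rule AE_mp, intro AE_I2 impI)
    fix w assume w: "w \<in> space M"
      and means_w: "\<forall>a\<in>{1, 2::nat}. (\<lambda>n. (\<Sum>k<n. X a k w) / n) \<longlonglongrightarrow> c a"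
    interpret co_path A X w l
      using assms(2,5,7) w by unfold_locales auto
    show "\<forall>a\<in>{1, 2::nat}. (\<lambda>t. emp_cost A X a t w * real (npulls A a t w) / total_cost A X t w)
        \<longlonglongrightarrow> sqrt (c a) / (sqrt (c 1) + sqrt (c 2))"
      using means_w by (intro emp_cost_share_tendsto) auto
  qed
qed

end
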